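(* Under the setting and hypotheses of the convergence theorem stated in the context (existence of a valid solution $\boldsymbol{x}^\star$ and priors satisfying $1\ge q_v>1-\epsilon_v$ if $\mathtt{x}^\star_v=0$, $0\le q_v<\epsilon_v$ if $\mathtt{x}^\star_v=1$), after the first BP iteration $$\mathsf{r}^{(1)}_v(\mathtt{x}^\star_v)>\mathsf{r}^{(1)}_v(1-\mathtt{x}^\star_v)\quad\text{for all } v\in\mathcal{V},$$ i.e., $\widehat{x}^{(1)}_v=\mathtt{x}^\star_v$ for all $v\in\mathcal{V}$.
   Context: Factor graph: a finite set $\mathcal{V}$ of binary variables $x_v\in\{0,1\}$ and a finite set $\mathcal{J}$ of factors; each factor $J$ has a nonempty neighborhood $\mathcal{V}_J\subseteq\mathcal{V}$ and a function $\mathsf{g}_J:\{0,1\}^{|\mathcal{V}_J|}\to\{0,1\}$. For $v\in\mathcal{V}$, $\mathcal{J}_v=\{J: v\in\mathcal{V}_J\}$, assumed nonempty. A valid solution is $\boldsymbol{x}^\star\in\{0,1\}^{\mathcal{V}}$ with $\mathsf{g}_J(\boldsymbol{x}^\star_{\mathcal{V}_J})=1$ for all $J$. Define $\kappa_v=\max_{J\in\mathcal{J}_v}|\{\mathbf{x}_{\mathcal{V}_J}:\mathsf{g}_J(\mathbf{x}_{\mathcal{V}_J})=1\}|$ and $\epsilon_v=1/(1+\kappa_v^{|\mathcal{J}_v|})$. BP: priors $\mathrm{P}_v(0)=q_v$, $\mathrm{P}_v(1)=1-q_v$; $\mathsf{m}^{(0)}_{v\to J}(0)=q_v$, $\mathsf{m}^{(0)}_{v\to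 J}(1)=1-q_v$; for $n\ge1$, $\mathsf{m}^{(n)}_{J\to v}(x)=\mathtt{C}^{(n)}_{J\to v}\sum_{\mathbf{x}_{\mathcal{V}_J\setminus v}}\mathsf{g}_J(\mathbf{x}_{\mathcal{V}_J\setminus v},x_v=x)\prod_{y\in\mathcal{V}_J\setminus v}\mathsf{m}^{(n-1)}_{y\to J}(x_y)$ and $\mathsf{m}^{(n)}_{v\to J}(x)=\mathtt{C}^{(n)}_{v\to J}\mathrm{P}_v(x)\prod_{I\in\mathcal{J}_v\setminus J}\mathsf{m}^{(n)}_{I\to v}(x)$, with positive normalizing constants making $\mathsf{m}(0)+\mathsf{m}(1)=1$. Marginals $\mathsf{r}^{(n)}_v(x)=\mathrm{P}_v(x)\prod_{J\in\mathcal{J}_v}\mathsf{m}^{(n)}_{J\to v}(x)$; decision $\widehat{x}^{(n)}_v=\mathsf{1}\{\mathsf{r}^{(n)}_v(1)\ge\mathsf{r}^{(n)}_v(0)\}$. *)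

theory Defs
  imports Main "HOL-Library.FuncSet" Complex_Main
begin

text \<open>Factor graph: variable set V (type 'v), factor set FJ (type 'j),
  neighbourhoods N J, factor functions g J acting on local configurations
  (functions in PiE (N J) (\<lambda>_. {0,1})) with values in {0,1}.\<close>

definition loc :: "('j \<Rightarrow> 'v set) \<Rightarrow> 'j \<Rightarrow> ('v \<Rightarrow> nat) set" where
  "loc N J = PiE (N J) (\<lambda>_. {0,1})"

definition factors_of :: "'j set \<Rightarrow> ('j \<Rightarrow> 'v set) \<Rightarrow> 'v \<Rightarrow> 'j set" where
  "factors_of FJ N v = {J \<in> FJ. v \<in> N J}"

definition kappa :: "'j set \<Rightarrow> ('j \<Rightarrow> 'v set) \<Rightarrow> ('j \<Rightarrow> ('v \<Rightarrow> nat) \<Rightarrow> nat) \<Rightarrow> 'v \<Rightarrow> nat" where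
  "kappa FJ N g v = Max ((\<lambda>J. card {x \<in> loc N J. g J x = 1}) ` factors_of FJ N v)"

definition eps :: "'j set \<Rightarrow> ('j \<Rightarrow> 'v set) \<Rightarrow> ('j \<Rightarrow> ('v \<Rightarrow> nat) \<Rightarrow> nat) \<Rightarrow> 'v \<Rightarrow> real" where
  "eps FJ N g v = 1 / (1 + real (kappa FJ N g v) ^ card (factors_of FJ N v))"

definition prior :: "('v \<Rightarrow> real) \<Rightarrow> 'v \<Rightarrow> nat \<Rightarrow> real" where
  "prior q v x = (if x = 0 then q v else 1 - q v)"

definition msg0_vJ :: "('v \<Rightarrow> real) \<Rightarrow> 'v \<Rightarrow> 'j \<Rightarrow> nat \<Rightarrow> real" where
  "msg0_vJ q v J x = prior q v x"

definition fsum1 :: "('j \<Rightarrow> 'v set) \<Rightarrow> ('j \<Rightarrow> ('v \<Rightarrow> nat) \<Rightarrow> nat) \<Rightarrow> ('v \<Rightarrow> real)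
    \<Rightarrow> 'j \<Rightarrow> 'v \<Rightarrow> nat \<Rightarrow> real" where
  "fsum1 N g q J v x =
     (\<Sum>x' \<in> PiE (N J - {v}) (\<lambda>_. {0,1}).
        real (g J (x'(v := x))) * (\<Prod>y \<in> N J - {v}. msg0_vJ q y J (x' y)))"

definition msg1_Jv :: "('j \<Rightarrow> 'v set) \<Rightarrow> ('j \<Rightarrow> ('v \<Rightarrow> nat) \<Rightarrow> nat) \<Rightarrow> ('v \<Rightarrow> real)
    \<Rightarrow> 'j \<Rightarrow> 'v \<Rightarrow> nat \<Rightarrow> real" where
  "msg1_Jv N g q J v x = fsum1 N g q J v x / (fsum1 N g q J v 0 + fsum1 N g q J v 1)"

definition marg1 :: "'j set \<Rightarrow> ('j \<Rightarrow> 'v set) \<Rightarrow> ('j \<Rightarrow> ('v \<Rightarrow> nat) \<Rightarrow> nat) \<Rightarrow> ('v \<Rightarrow> real)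
    \<Rightarrow> 'v \<Rightarrow> nat \<Rightarrow> real" where
  "marg1 FJ N g q v x = prior q v x * (\<Prod>J \<in> factors_of FJ N v. msg1_Jv N g q J v x)"

definition dec1 :: "'j set \<Rightarrow> ('j \<Rightarrow> 'v set) \<Rightarrow> ('j \<Rightarrow> ('v \<Rightarrow> nat) \<Rightarrow> nat) \<Rightarrow> ('v \<Rightarrow> real)
    \<Rightarrow> 'v \<Rightarrow> nat" where
  "dec1 FJ N g q v = (if marg1 FJ N g q v 1 \<ge> marg1 FJ N g q v 0 then 1 else 0)"

end

theory Submission
  imports Defs
begin

text \<open>Let \<open>a = x\<^sup>\<star>\<^sub>v\<close> and \<open>b = 1 - a\<close>. The priors make \<open>x\<^sup>\<star>\<close> the most likely value
  at every variable, so in the first factor-to-variable message the term of the valid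
  configuration alone gives \<open>m(a) \<ge> T\<close>, where \<open>T\<close> is the product of the neighbours' priors
  at \<open>x\<^sup>\<star>\<close>, while each of the at most \<open>\<kappa>\<^sub>v\<close> satisfying configurations contributes at most
  \<open>T\<close> to \<open>m(b)\<close>. Hence \<open>m(b) \<le> \<kappa>\<^sub>v m(a)\<close> for every factor at \<open>v\<close>, and
  \<open>r(b) \<le> P\<^sub>v(b) \<kappa>\<^sub>v\<^bsup>|\<J>\<^sub>v|\<^esup> \<Pi> m(a) < \<epsilon>\<^sub>v \<kappa>\<^sub>v\<^bsup>|\<J>\<^sub>v|\<^esup> \<Pi> m(a) = (1 - \<epsilon>\<^sub>v) \<Pi> m(a) < r(a)\<close>.\<close>

lemma inj_on_fun_upd_PiE:
  assumes "x \<notin> S"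
  shows "inj_on (\<lambda>f. f(x := c)) (Pi\<^sub>E S T)"
  using assms by (auto simp: inj_on_def fun_eq_iff PiE_def extensional_def) metis

lemma restrict_in_loc:
  assumes "\<And>y. y \<in> N J \<Longrightarrow> xs y \<in> {0, 1}"
  shows "restrict xs (N J) \<in> loc N J"
  using assms by (auto simp: loc_def restrict_PiE_iff)

lemma card_sat_le_kappa:
  assumes "finite FJ" and "J \<in> factors_of FJ N v"
  shows "card {x \<in> loc N J. g J x = 1} \<le> kappa FJ N g v"
  unfolding kappa_def
  by (rule Max_ge) (use assms in \<open>auto simp: factors_of_def\<close>)

lemma kappa_pos:
  assumes "finite FJ" and "J \<in> factors_of FJ N v" and "finite (N J)"
    and "x \<in> loc N J" and "g J x = 1"
  shows "1 \<le> kappa FJ N g v"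
proof -
  have "finite {x \<in> loc N J. g J x = 1}"
    using \<open>finite (N J)\<close> by (simp add: loc_def finite_PiE)
  then have "0 < card {x \<in> loc N J. g J x = 1}"
    using assms(4,5) by (auto simp: card_gt_0_iff)
  then show ?thesis
    using card_sat_le_kappa[OF assms(1,2), of g] by linarith
qed

lemma eps_mult_kappa_power:
  "eps FJ N g v * real (kappa FJ N g v) ^ card (factors_of FJ N v) = 1 - eps FJ N g v"
proof -
  have "0 \<le> real (kappa FJ N g v) ^ card (factors_of FJ N v)"
    by simp
  then have "1 + real (kappa FJ N g v) ^ card (factors_of FJ N v) \<noteq> 0"
    by linarith
  then show ?thesis
    unfolding eps_def by (simp add: field_simps)
qed

lemma eps_le_half:
  assumes "1 \<le> kappa FJ N g v"
  shows "eps FJ N g v \<le> 1 / 2"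
proof -
  have "1 \<le> real (kappa FJ N g v) ^ card (factors_of FJ N v)"
    using assms by (simp add: one_le_power)
  then show ?thesis
    unfolding eps_def by (simp add: divide_simps)
qed

lemma prior_valid_bounds:
  assumes "xs u \<in> {0, 1}"
    and "xs u = 0 \<Longrightarrow> q u \<le> 1 \<and> q u > 1 - e"
    and "xs u = 1 \<Longrightarrow> 0 \<le> q u \<and> q u < e"
  shows "1 - e < prior q u (xs u)" and "0 \<le> prior q u (1 - xs u)"
    and "prior q u (1 - xs u) < e"
  using assms by (auto simp: prior_def)

lemma prior_dominated:
  assumes "xs u \<in> {0, 1}" and "c \<in> {0, 1}" and "e \<le> 1 / 2"
    and "xs u = 0 \<Longrightarrow> q u \<le> 1 \<and> q u > 1 - e"
    and "xs u = 1 \<Longrightarrow> 0 \<le> q u \<and> q u < e"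
  shows "0 \<le> prior q u c \<and> prior q u c \<le> prior q u (xs u)"
proof -
  have "c = xs u \<or> c = 1 - xs u"
    using assms(1,2) by auto
  then show ?thesis
    using prior_valid_bounds[of xs u q e, OF assms(1,4,5)] assms(3) by auto
qed

lemma fsum1_nonneg:
  assumes "\<And>y c. y \<in> N J - {v} \<Longrightarrow> c \<in> {0, 1} \<Longrightarrow> 0 \<le> prior q y c"
  shows "0 \<le> fsum1 N g q J v c"
  unfolding fsum1_def msg0_vJ_def
  by (intro sum_nonneg mult_nonneg_nonneg prod_nonneg) (use assms in \<open>auto simp: PiE_iff\<close>)

lemma fsum1_ge_prod_prior:
  assumes "finite (N J)" and "v \<in> N J" and "g J (restrict xs (N J)) = 1"
    and "\<And>y. y \<in> N J \<Longrightarrow> xs y \<in> {0, 1}"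
    and "\<And>y c. y \<in> N J - {v} \<Longrightarrow> c \<in> {0, 1} \<Longrightarrow> 0 \<le> prior q y c"
  shows "(\<Prod>y \<in> N J - {v}. prior q y (xs y)) \<le> fsum1 N g q J v (xs v)"
proof -
  define x0 where "x0 = restrict xs (N J - {v})"
  have x0: "x0 \<in> PiE (N J - {v}) (\<lambda>_. {0, 1})"
    using assms(4) by (auto simp: x0_def restrict_PiE_iff)
  have "x0(v := xs v) = restrict xs (N J)"
    using \<open>v \<in> N J\<close> by (auto simp: x0_def restrict_def)
  then have "(\<Prod>y \<in> N J - {v}. prior q y (xs y))
      = real (g J (x0(v := xs v))) * (\<Prod>y \<in> N J - {v}. msg0_vJ q y J (x0 y))"
    using assms(3) by (simp add: x0_def msg0_vJ_def)
  also have "\<dots> \<le> fsum1 N g q J v (xs v)"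
    unfolding fsum1_def
    by (rule member_le_sum[OF x0])
      (use assms(1,5) in \<open>auto simp: finite_PiE msg0_vJ_def PiE_iff
            intro!: mult_nonneg_nonneg prod_nonneg\<close>)
  finally show ?thesis .
qed

text \<open>Each configuration satisfying \<open>g\<^sub>J\<close> arises from at most one term of the sum,
  and each term is dominated by the product of the priors at \<open>x\<^sup>\<star>\<close>.\<close>

lemma fsum1_le_card_sat:
  assumes "finite (N J)" and "v \<in> N J" and "c \<in> {0, 1}"
    and g01: "\<And>x. x \<in> loc N J \<Longrightarrow> g J x \<in> {0, 1}"
    and dom: "\<And>y c. y \<in> N J - {v} \<Longrightarrow> c \<in> {0, 1} \<Longrightarrow>
                0 \<le> prior q y c \<and> prior q y c \<le> prior q y (xs y)"
  shows "fsum1 N g q J v c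
    \<le> card {x \<in> loc N J. g J x = 1} * (\<Prod>y \<in> N J - {v}. prior q y (xs y))"
proof -
  define P where "P = PiE (N J - {v}) (\<lambda>_. {0::nat, 1})"
  define T where "T = (\<Prod>y \<in> N J - {v}. prior q y (xs y))"
  define Q where "Q = {x' \<in> P. g J (x'(v := c)) = 1}"
  have finP: "finite P"
    using \<open>finite (N J)\<close> by (simp add: P_def finite_PiE)
  have upd_loc: "x'(v := c) \<in> loc N J" if "x' \<in> P" for x'
    using that \<open>v \<in> N J\<close> \<open>c \<in> {0, 1}\<close> by (auto simp: P_def loc_def PiE_iff extensional_def)
  have term_le: "real (g J (x'(v := c))) * (\<Prod>y \<in> N J - {v}. msg0_vJ q y J (x' y))
      \<le> (if g J (x'(v := c)) = 1 then T else 0)" if "x' \<in> P" for x'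
  proof -
    have "x' y \<in> {0, 1}" if "y \<in> N J - {v}" for y
      using \<open>x' \<in> P\<close> that by (auto simp: P_def)
    then have "(\<Prod>y \<in> N J - {v}. msg0_vJ q y J (x' y)) \<le> T"
      unfolding T_def msg0_vJ_def by (intro prod_mono dom)
    then show ?thesis
      using g01[OF upd_loc[OF that]] by auto
  qed
  have "fsum1 N g q J v c \<le> (\<Sum>x' \<in> P. if g J (x'(v := c)) = 1 then T else 0)"
    unfolding fsum1_def P_def[symmetric] by (rule sum_mono[OF term_le])
  also have "\<dots> = card Q * T"
    by (simp add: Q_def sum.inter_filter[OF finP, symmetric])
  also have "\<dots> \<le> card {x \<in> loc N J. g J x = 1} * T"
  proof (rule mult_right_mono)
    have "inj_on (\<lambda>x'. x'(v := c)) Q"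
      using inj_on_fun_upd_PiE[of v "N J - {v}" c "\<lambda>_. {0, 1}"]
      by (rule inj_on_subset) (auto simp: Q_def P_def)
    moreover have "(\<lambda>x'. x'(v := c)) ` Q \<subseteq> {x \<in> loc N J. g J x = 1}"
      using upd_loc by (auto simp: Q_def)
    moreover have "finite {x \<in> loc N J. g J x = 1}"
      using \<open>finite (N J)\<close> by (simp add: loc_def finite_PiE)
    ultimately show "real (card Q) \<le> real (card {x \<in> loc N J. g J x = 1})"
      by (simp add: card_inj_on_le)
    show "0 \<le> T"
      unfolding T_def by (rule prod_nonneg) (use dom[of _ 0] in fastforce)
  qed
  finally show ?thesis
    by (simp add: T_def)
qed

lemma msg1_Jv_flip_le:
  assumes "a \<in> {0, 1}" and "0 < fsum1 N g q J v a" and "0 \<le> fsum1 N g q J v (1 - a)"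
    and "fsum1 N g q J v (1 - a) \<le> C * fsum1 N g q J v a"
  shows "0 < msg1_Jv N g q J v a \<and> 0 \<le> msg1_Jv N g q J v (1 - a)
    \<and> msg1_Jv N g q J v (1 - a) \<le> C * msg1_Jv N g q J v a"
proof -
  have Z: "fsum1 N g q J v 0 + fsum1 N g q J v 1 = fsum1 N g q J v a + fsum1 N g q J v (1 - a)"
    using \<open>a \<in> {0, 1}\<close> by auto
  show ?thesis
    using assms(2-4) unfolding msg1_Jv_def Z by (auto simp: divide_simps)
qed

lemma msg1_Jv_flip_le_card_sat:
  assumes "finite (N J)" and "v \<in> N J" and "g J (restrict xs (N J)) = 1"
    and "\<And>x. x \<in> loc N J \<Longrightarrow> g J x \<in> {0, 1}"
    and "\<And>y. y \<in> N J \<Longrightarrow> xs y \<in> {0, 1}"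
    and dom: "\<And>y c. y \<in> N J - {v} \<Longrightarrow> c \<in> {0, 1} \<Longrightarrow>
                0 \<le> prior q y c \<and> prior q y c \<le> prior q y (xs y)"
  shows "0 < msg1_Jv N g q J v (xs v) \<and> 0 \<le> msg1_Jv N g q J v (1 - xs v)
    \<and> msg1_Jv N g q J v (1 - xs v)
        \<le> card {x \<in> loc N J. g J x = 1} * msg1_Jv N g q J v (xs v)"
proof -
  define T where "T = (\<Prod>y \<in> N J - {v}. prior q y (xs y))"
  have xs_v: "xs v \<in> {0, 1}" and flip: "1 - xs v \<in> {0, 1}"
    using assms(2,5) by auto
  have "0 < T"
    unfolding T_def
  proof (rule prod_pos)
    fix y assume "y \<in> N J - {v}"
    have "prior q y 0 + prior q y 1 = 1"
      by (simp add: prior_def)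
    then show "0 < prior q y (xs y)"
      using dom[OF \<open>y \<in> N J - {v}\<close>, of 0] dom[OF \<open>y \<in> N J - {v}\<close>, of 1] by simp
  qed
  have "0 \<le> fsum1 N g q J v (1 - xs v)"
    by (rule fsum1_nonneg) (use dom in blast)
  moreover have "T \<le> fsum1 N g q J v (xs v)"
    unfolding T_def
    by (rule fsum1_ge_prod_prior[of N J v g xs q, OF assms(1-3)]) (use assms(5) dom in blast)+
  moreover have "fsum1 N g q J v (1 - xs v) \<le> card {x \<in> loc N J. g J x = 1} * T"
    unfolding T_def by (rule fsum1_le_card_sat[of N J v "1 - xs v" g q xs, OF assms(1,2) flip assms(4) dom])
  ultimately show ?thesis
    using \<open>0 < T\<close> mult_left_mono[of T "fsum1 N g q J v (xs v)" "card {x \<in> loc N J. g J x = 1}"]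
    by (intro msg1_Jv_flip_le[OF xs_v]) simp_all
qed

lemma msg1_Jv_flip_le_kappa:
  assumes "finite FJ" and J: "J \<in> factors_of FJ N v" and "finite (N J)"
    and "g J (restrict xs (N J)) = 1"
    and "\<And>x. x \<in> loc N J \<Longrightarrow> g J x \<in> {0, 1}"
    and "\<And>y. y \<in> N J \<Longrightarrow> xs y \<in> {0, 1}"
    and "\<And>y c. y \<in> N J - {v} \<Longrightarrow> c \<in> {0, 1} \<Longrightarrow>
           0 \<le> prior q y c \<and> prior q y c \<le> prior q y (xs y)"
  shows "0 < msg1_Jv N g q J v (xs v) \<and> 0 \<le> msg1_Jv N g q J v (1 - xs v)
    \<and> msg1_Jv N g q J v (1 - xs v) \<le> kappa FJ N g v * msg1_Jv N g q J v (xs v)"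
proof -
  have "v \<in> N J"
    using J by (simp add: factors_of_def)
  from msg1_Jv_flip_le_card_sat[of N J v g xs, OF assms(3) this assms(4-7)]
  have "0 < msg1_Jv N g q J v (xs v) \<and> 0 \<le> msg1_Jv N g q J v (1 - xs v)
    \<and> msg1_Jv N g q J v (1 - xs v)
        \<le> card {x \<in> loc N J. g J x = 1} * msg1_Jv N g q J v (xs v)" .
  moreover have "real (card {x \<in> loc N J. g J x = 1}) \<le> real (kappa FJ N g v)"
    using card_sat_le_kappa[OF assms(1) J] by simp
  ultimately show ?thesis
    using mult_right_mono[of "real (card {x \<in> loc N J. g J x = 1})" "real (kappa FJ N g v)"
        "msg1_Jv N g q J v (xs v)"]
    by linarith
qed

lemma marg1_flip_lt:
  assumes "finite (factors_of FJ N v)"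
    and msg: "\<And>J. J \<in> factors_of FJ N v \<Longrightarrow> 0 < msg1_Jv N g q J v a
      \<and> 0 \<le> msg1_Jv N g q J v (1 - a) \<and> msg1_Jv N g q J v (1 - a) \<le> K * msg1_Jv N g q J v a"
    and "0 \<le> K" and K_eps: "e * K ^ card (factors_of FJ N v) = 1 - e"
    and "1 - e < prior q v a" and "0 \<le> prior q v (1 - a)" and "prior q v (1 - a) < e"
  shows "marg1 FJ N g q v (1 - a) < marg1 FJ N g q v a"
proof -
  let ?F = "factors_of FJ N v"
  define M where "M = (\<Prod>J \<in> ?F. msg1_Jv N g q J v a)"
  have "0 < M"
    unfolding M_def by (rule prod_pos) (use msg in auto)
  have "(\<Prod>J \<in> ?F. msg1_Jv N g q J v (1 - a)) \<le> (\<Prod>J \<in> ?F. K * msg1_Jv N g q J v a)"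
    by (rule prod_mono) (use msg in auto)
  also have "\<dots> = K ^ card ?F * M"
    by (simp add: M_def prod.distrib)
  finally have "marg1 FJ N g q v (1 - a) \<le> prior q v (1 - a) * K ^ card ?F * M"
    unfolding marg1_def using \<open>0 \<le> prior q v (1 - a)\<close> by (simp add: mult_left_mono mult.assoc)
  also have "\<dots> \<le> e * K ^ card ?F * M"
    using assms(3,7) \<open>0 < M\<close> by (intro mult_right_mono) auto
  also have "\<dots> < prior q v a * M"
    unfolding K_eps using assms(5) \<open>0 < M\<close> by simp
  also have "\<dots> = marg1 FJ N g q v a"
    by (simp add: marg1_def M_def)
  finally show ?thesis .
qed

theorem lemma1:
  fixes V :: "'v set" and FJ :: "'j set" and N :: "'j \<Rightarrow> 'v set"
    and g :: "'j \<Rightarrow> ('v \<Rightarrow> nat) \<Rightarrow> nat" and q :: "'v \<Rightarrow> real"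
    and xs :: "'v \<Rightarrow> nat"
  assumes finV: "finite V" and finJ: "finite FJ"
    and nbhd: "\<And>J. J \<in> FJ \<Longrightarrow> N J \<noteq> {} \<and> N J \<subseteq> V"
    and g01: "\<And>J x. J \<in> FJ \<Longrightarrow> x \<in> loc N J \<Longrightarrow> g J x \<in> {0, 1}"
    and Jv_ne: "\<And>v. v \<in> V \<Longrightarrow> factors_of FJ N v \<noteq> {}"
    and xs01: "\<And>v. v \<in> V \<Longrightarrow> xs v \<in> {0, 1}"
    and valid: "\<And>J. J \<in> FJ \<Longrightarrow> g J (restrict xs (N J)) = 1"
    and q0: "\<And>v. v \<in> V \<Longrightarrow> xs v = 0 \<Longrightarrow> q v \<le> 1 \<and> q v > 1 - eps FJ N g v"
    and q1: "\<And>v. v \<in> V \<Longrightarrow> xs v = 1 \<Longrightarrow> 0 \<le> q v \<and> q v < eps FJ N g v"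
  shows "\<forall>v \<in> V. marg1 FJ N g q v (xs v) > marg1 FJ N g q v (1 - xs v)
                \<and> dec1 FJ N g q v = xs v"
proof
  fix v assume "v \<in> V"
  have finN: "finite (N J)" if "J \<in> FJ" for J
    using nbhd[OF that] finite_subset[OF _ finV] by blast
  have eps_half: "eps FJ N g u \<le> 1 / 2" if "u \<in> V" for u
  proof -
    obtain J where J: "J \<in> factors_of FJ N u"
      using Jv_ne \<open>u \<in> V\<close> by blast
    then have "J \<in> FJ"
      by (simp add: factors_of_def)
    have "restrict xs (N J) \<in> loc N J"
      by (rule restrict_in_loc) (use nbhd[OF \<open>J \<in> FJ\<close>] xs01 in blast)
    with valid[OF \<open>J \<in> FJ\<close>] show ?thesis
      by (intro eps_le_half kappa_pos[OF finJ J finN[OF \<open>J \<in> FJ\<close>]])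
  qed
  have dom: "0 \<le> prior q u c \<and> prior q u c \<le> prior q u (xs u)"
    if "u \<in> V" and "c \<in> {0, 1}" for u c
    using prior_dominated[of xs u c "eps FJ N g u" q] xs01 q0 q1 eps_half that by blast
  have msg: "0 < msg1_Jv N g q J v (xs v) \<and> 0 \<le> msg1_Jv N g q J v (1 - xs v)
      \<and> msg1_Jv N g q J v (1 - xs v) \<le> real (kappa FJ N g v) * msg1_Jv N g q J v (xs v)"
    if J: "J \<in> factors_of FJ N v" for J
  proof -
    have "J \<in> FJ" and "N J \<subseteq> V"
      using J nbhd by (auto simp: factors_of_def)
    show ?thesis
      by (rule msg1_Jv_flip_le_kappa[of FJ J N v g xs, OF finJ J finN[OF \<open>J \<in> FJ\<close>]
            valid[OF \<open>J \<in> FJ\<close>] g01[OF \<open>J \<in> FJ\<close>]])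
        (use xs01 dom \<open>N J \<subseteq> V\<close> in blast)+
  qed
  have "finite (factors_of FJ N v)"
    using finJ by (simp add: factors_of_def)
  then have "marg1 FJ N g q v (1 - xs v) < marg1 FJ N g q v (xs v)"
    using prior_valid_bounds[of xs v q "eps FJ N g v"] xs01 q0 q1 \<open>v \<in> V\<close>
    by (intro marg1_flip_lt[OF _ msg _ eps_mult_kappa_power]) simp_all
  then show "marg1 FJ N g q v (xs v) > marg1 FJ N g q v (1 - xs v) \<and> dec1 FJ N g q v = xs v"
    using xs01[OF \<open>v \<in> V\<close>] by (auto simp: dec1_def)
qed

end
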